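(* Let $a>0$, $a_N=a\ln N/N$, and for $N\ge1$ let $P_{N,a_N}$ be the probability on sequences $(n_j)_{j\ge0}$ of nonnegative integers with $\sum_jn_j=N$ given by $P_{N,a_N}((n_j))\propto e^{-a_N\sum_j jn_j}$; write $\langle n_j\rangle_{N,a_N}$ for the expectation of $n_j$. Then: (i) For any $a>0$: $\lim_{N\to\infty}\frac1N\sum_{j<2/a_N}\langle n_j\rangle_{N,a_N}=1$ (complete generalized Bose–Einstein condensation). (ii) For $0<a<1$: $\lim_{N\to\infty}N^{-a}\langle n_i\rangle_{N,a_N}=1$ for every choice of $i=i(N)$ with $i=o\big(N^{1-a}/\ln^2N\big)$. (iii) For $a>1$: $\lim_{N\to\infty}N^{-1}\langle n_i\rangle_{N,a_N}=0$ for every $i\ge1$, but $\lim_{N\to\infty}N^{-\eta}\langle n_1\rangle_{N,a_N}=\infty$ for every $\eta<1$.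
   Context: This is the canonical ensemble of $N$ noninteracting bosons in a one-dimensional harmonic trap with scaled frequency $\omega\ln N/N$ at inverse temperature $\beta$, $a=\hbar\omega\beta$, $n_j$ being the occupation number of the $j$-th one-particle level. *)

theory Defs
  imports "HOL-Analysis.Analysis" "HOL-Library.Landau_Symbols"
begin

definition configs :: "nat \<Rightarrow> (nat \<Rightarrow> nat) set" where
  "configs N = {n. finite {j. n j \<noteq> 0} \<and> (\<Sum>j\<in>{j. n j \<noteq> 0}. n j) = N}"

definition energy :: "(nat \<Rightarrow> nat) \<Rightarrow> nat" where
  "energy n = (\<Sum>j\<in>{j. n j \<noteq> 0}. j * n j)"

definition weight :: "real \<Rightarrow> (nat \<Rightarrow> nat) \<Rightarrow> real" where
  "weight b n = exp (- b * real (energy n))"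

definition partition_fn :: "nat \<Rightarrow> real \<Rightarrow> real" where
  "partition_fn N b = (\<Sum>\<^sub>\<infinity>n\<in>configs N. weight b n)"

definition mean_occ :: "nat \<Rightarrow> real \<Rightarrow> nat \<Rightarrow> real" where
  "mean_occ N b j = (\<Sum>\<^sub>\<infinity>n\<in>configs N. real (n j) * weight b n) / partition_fn N b"

definition scaled_a :: "real \<Rightarrow> nat \<Rightarrow> real" where
  "scaled_a a N = a * ln (real N) / real N"

end

theory Submission
  imports Defs "HOL-Real_Asymp.Real_Asymp"
begin

text \<open>Write q = exp(-b) and Z(N) for the partition function. Adding k particles to level j maps
  the configurations of N - k particles bijectively onto those of N particles with n_j >= k,
  multiplying weights by q^(j k); raising every particle by one level maps the configurations of
  N particles onto those with n_0 = 0, multiplying weights by q^N. Hence Z(N - 1) = (1 - q^N) Z(N)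
  and
    <n_j> = sum_{k=1..N} q^(j k) Z(N - k) / Z(N) = sum_{k=1..N} q^(j k) prod_{i<k} (1 - q^(N - i)).
  All three claims are elementary estimates of this closed form at b = a_N, where q^N = N^(-a).
  Summed over j < J it equals N up to an error of at most 1/(1 - q) = O(N / ln N) once
  q^J <= 1/2, which gives (i), and the same bound gives <n_i> = o(N) for i >= 1. The k-th product
  lies between (1 - q^(N+1-K))^k (for k <= K) and (1 - N^(-a))^k; the upper bound gives
  <n_i> <= N^a, and truncating the sum at K = N^a ln N gives the matching lower bound when a < 1.
  For a > 1, Bernoulli's inequality shows that the products lower <n_1> by at most
  N^2 q^N = N^(2-a), which is small against its main term of order 1/b = N / (a ln N).\<close>

lemma exp_minus_mult_of_nat: "exp (- b * real n) = exp (- b) ^ n"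
  by (simp add: exp_of_nat_mult[symmetric] mult.commute)

lemma sum_power_Suc_lessThan:
  fixes x :: real
  assumes "x \<noteq> 1"
  shows "(\<Sum>k<n. x ^ Suc k) = x * (1 - x ^ n) / (1 - x)"
  using assms by (simp add: sum_distrib_left[symmetric] sum_gp_strict)

lemma sum_power_Suc_lessThan_le:
  fixes x :: real
  assumes "0 \<le> x" "x < 1"
  shows "(\<Sum>k<n. x ^ Suc k) \<le> x / (1 - x)"
proof -
  have "x * (1 - x ^ n) \<le> x"
    using assms by (simp add: mult_left_le power_le_one)
  then show ?thesis
    unfolding sum_power_Suc_lessThan[OF less_imp_neq[OF assms(2)]] using assms
    by (simp add: divide_right_mono)
qed

lemma power_le_exp_minus:
  fixes y :: real
  assumes "0 \<le> y"
  shows "y ^ K \<le> exp (- (real K * (1 - y)))"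
proof -
  have "y ^ K \<le> exp (- (1 - y)) ^ K"
    using exp_ge_add_one_self[of "- (1 - y)"] assms by (intro power_mono) auto
  then show ?thesis
    by (simp add: exp_of_nat_mult[symmetric] algebra_simps)
qed

lemma finite_subset_image_inj:
  assumes "inj f" "finite F" "F \<subseteq> f ` A"
  obtains G where "G \<subseteq> A" "finite G" "F = f ` G"
proof -
  obtain G where "G \<subseteq> A" "F = f ` G"
    using assms(3) by (auto simp: subset_image_iff)
  moreover have "finite G"
    using assms(2) \<open>F = f ` G\<close> finite_image_iff[OF inj_on_subset[OF assms(1) subset_UNIV]] by simp
  ultimately show ?thesis
    using that by blast
qed

lemma has_sum_sum:
  fixes f :: "'i \<Rightarrow> 'a \<Rightarrow> 'b::topological_comm_monoid_add"
  assumes "finite I" "\<And>i. i \<in> I \<Longrightarrow> (f i has_sum s i) A"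
  shows "((\<lambda>x. \<Sum>i\<in>I. f i x) has_sum (\<Sum>i\<in>I. s i)) A"
  using assms by (induction I rule: finite_induct) (auto intro: has_sum_add)

section \<open>Configurations\<close>

lemma support_subset_lessThan:
  fixes n :: "nat \<Rightarrow> nat"
  shows "\<forall>j\<ge>M. n j = 0 \<Longrightarrow> {j. n j \<noteq> 0} \<subseteq> {..<M}"
  by (auto simp: subset_iff) (metis not_le less_irrefl)

lemma sum_support_eq_sum_lessThan:
  fixes n f :: "nat \<Rightarrow> nat"
  assumes "\<forall>j\<ge>M. n j = 0"
  shows "(\<Sum>j\<in>{j. n j \<noteq> 0}. f j * n j) = (\<Sum>j<M. f j * n j)"
  using assms support_subset_lessThan[OF assms] by (intro sum.mono_neutral_left) auto

lemma mem_configs_iff: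
  assumes "\<forall>j\<ge>M. n j = 0"
  shows "n \<in> configs N \<longleftrightarrow> (\<Sum>j<M. n j) = N"
proof -
  have "finite {j. n j \<noteq> 0}"
    by (rule finite_subset[OF support_subset_lessThan[OF assms]]) simp
  then show ?thesis
    using sum_support_eq_sum_lessThan[OF assms, of "\<lambda>_. 1"] by (simp add: configs_def)
qed

lemma energy_eq_sum_lessThan:
  "\<forall>j\<ge>M. n j = 0 \<Longrightarrow> energy n = (\<Sum>j<M. j * n j)"
  unfolding energy_def by (rule sum_support_eq_sum_lessThan)

lemma configs_finite_support:
  assumes "finite F" "F \<subseteq> configs N"
  obtains M where "\<forall>n\<in>F. \<forall>j\<ge>M. n j = 0"
proof -
  have "finite (\<Union>n\<in>F. {j. n j \<noteq> 0})"
    using assms by (auto simp: configs_def)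
  then obtain M where "(\<Union>n\<in>F. {j. n j \<noteq> 0}) \<subseteq> {..<M}"
    using finite_nat_bounded by blast
  then show ?thesis
    by (intro that[of M]) (auto simp: subset_iff)
qed

lemma configs_le: "n \<in> configs N \<Longrightarrow> n j \<le> N"
proof -
  assume n: "n \<in> configs N"
  obtain M where M: "\<forall>i\<ge>M. n i = 0"
    using configs_finite_support[of "{n}"] n by auto
  then have "\<forall>i\<ge>max M (Suc j). n i = 0" by simp
  then have "(\<Sum>i<max M (Suc j). n i) = N"
    using n mem_configs_iff by blast
  moreover have "n j \<le> (\<Sum>i<max M (Suc j). n i)"
    by (rule member_le_sum) auto
  ultimately show ?thesis by simp
qed

lemma configs_0: "configs 0 = {\<lambda>_. 0}"
proof -
  have "(\<lambda>_. 0) \<in> configs 0"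
    by (subst mem_configs_iff[of 0]) auto
  moreover have "n = (\<lambda>_. 0)" if "n \<in> configs 0" for n
    using configs_le[OF that] by auto
  ultimately show ?thesis by blast
qed

lemma ground_state_configs:
  "(\<lambda>j. if j = 0 then N else 0) \<in> configs N"
  "energy (\<lambda>j. if j = 0 then N else 0) = 0"
  by (subst mem_configs_iff[of 1]; simp) (subst energy_eq_sum_lessThan[of 1]; simp)

definition add_occ :: "nat \<Rightarrow> nat \<Rightarrow> (nat \<Rightarrow> nat) \<Rightarrow> nat \<Rightarrow> nat" where
  "add_occ j k n = n(j := n j + k)"

definition shift_up :: "(nat \<Rightarrow> nat) \<Rightarrow> nat \<Rightarrow> nat" where
  "shift_up m j = (case j of 0 \<Rightarrow> 0 | Suc i \<Rightarrow> m i)"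

lemma add_occ_apply: "add_occ j k n i = n i + (if i = j then k else 0)"
  by (simp add: add_occ_def)

lemma add_occ_configs:
  assumes "m \<in> configs N"
  shows "add_occ j k m \<in> configs (N + k)" and "energy (add_occ j k m) = energy m + j * k"
proof -
  obtain M0 where "\<forall>i\<ge>M0. m i = 0"
    using configs_finite_support[of "{m}"] assms by auto
  then have M: "\<forall>i\<ge>max M0 (Suc j). m i = 0" "\<forall>i\<ge>max M0 (Suc j). add_occ j k m i = 0"
    by (auto simp: add_occ_apply)
  show "add_occ j k m \<in> configs (N + k)"
    using assms unfolding mem_configs_iff[OF M(1)] mem_configs_iff[OF M(2)]
    by (simp add: add_occ_apply sum.distrib)
  have "(\<Sum>i<max M0 (Suc j). i * (if i = j then k else 0)) = j * k"
    by (subst sum.cong[OF refl, of _ _ "\<lambda>i. if i = j then j * k else 0"]) auto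
  then show "energy (add_occ j k m) = energy m + j * k"
    unfolding energy_eq_sum_lessThan[OF M(1)] energy_eq_sum_lessThan[OF M(2)]
    by (simp only: add_occ_apply distrib_left sum.distrib)
qed

lemma inj_add_occ: "inj (add_occ j k)"
proof (rule injI, rule ext)
  fix m m' i assume "add_occ j k m = add_occ j k m'"
  then have "add_occ j k m i = add_occ j k m' i" by simp
  then show "m i = m' i" by (simp add: add_occ_apply)
qed

lemma configs_occ_ge_eq_image:
  assumes "k \<le> N"
  shows "{n \<in> configs N. k \<le> n j} = add_occ j k ` configs (N - k)"
proof
  show "add_occ j k ` configs (N - k) \<subseteq> {n \<in> configs N. k \<le> n j}"
    using add_occ_configs(1)[of _ "N - k" j k] assms by (auto simp: add_occ_apply)
next
  show "{n \<in> configs N. k \<le> n j} \<subseteq> add_occ j k ` configs (N - k)"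
  proof safe
    fix n assume n: "n \<in> configs N" "k \<le> n j"
    obtain M0 where "\<forall>i\<ge>M0. n i = 0"
      using configs_finite_support[of "{n}"] n by auto
    then have M: "\<forall>i\<ge>max M0 (Suc j). n i = 0" "\<forall>i\<ge>max M0 (Suc j). (n(j := n j - k)) i = 0"
      by auto
    have "n(j := n j - k) \<in> configs (N - k)"
      using n unfolding mem_configs_iff[OF M(1)] mem_configs_iff[OF M(2)]
      by (simp add: sum.remove[of "{..<max M0 (Suc j)}" j])
    moreover have "n = add_occ j k (n(j := n j - k))"
      using n by (auto simp: add_occ_def)
    ultimately show "n \<in> add_occ j k ` configs (N - k)" by blast
  qed
qed

lemma shift_up_configs:
  assumes "m \<in> configs N"
  shows "shift_up m \<in> configs N" and "energy (shift_up m) = energy m + N"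
proof -
  obtain M where M: "\<forall>i\<ge>M. m i = 0"
    using configs_finite_support[of "{m}"] assms by auto
  then have M': "\<forall>i\<ge>Suc M. shift_up m i = 0"
    by (auto simp: shift_up_def split: nat.splits)
  have sum_m: "(\<Sum>i<M. m i) = N"
    using assms mem_configs_iff[OF M] by simp
  show "shift_up m \<in> configs N"
    unfolding mem_configs_iff[OF M'] sum.lessThan_Suc_shift by (simp add: shift_up_def sum_m)
  show "energy (shift_up m) = energy m + N"
    unfolding energy_eq_sum_lessThan[OF M] energy_eq_sum_lessThan[OF M'] sum.lessThan_Suc_shift
    by (simp add: shift_up_def sum.distrib sum_m)
qed

lemma shift_up_Suc [simp]: "shift_up m (Suc j) = m j"
  by (simp add: shift_up_def)

lemma inj_shift_up: "inj shift_up"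
proof (rule injI)
  fix m m' assume "shift_up m = shift_up m'"
  then have "shift_up m (Suc i) = shift_up m' (Suc i)" for i by simp
  then show "m = m'" by (auto simp: shift_up_def)
qed

lemma configs_occ0_eq_image: "{n \<in> configs N. n 0 = 0} = shift_up ` configs N"
proof
  show "shift_up ` configs N \<subseteq> {n \<in> configs N. n 0 = 0}"
    using shift_up_configs(1) by (auto simp: shift_up_def)
next
  show "{n \<in> configs N. n 0 = 0} \<subseteq> shift_up ` configs N"
  proof safe
    fix n assume n: "n \<in> configs N" "n 0 = 0"
    obtain M where M: "\<forall>i\<ge>M. n i = 0"
      using configs_finite_support[of "{n}"] n by auto
    then have M': "\<forall>i\<ge>Suc M. n i = 0" "\<forall>i\<ge>M. n (Suc i) = 0" by simp_all
    have "(\<lambda>i. n (Suc i)) \<in> configs N"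
      using n unfolding mem_configs_iff[OF M'(1)] mem_configs_iff[OF M'(2)] sum.lessThan_Suc_shift
      by simp
    moreover have "n = shift_up (\<lambda>i. n (Suc i))"
      using n by (auto simp: shift_up_def split: nat.splits)
    ultimately show "n \<in> shift_up ` configs N" by blast
  qed
qed

lemma weight_add_occ:
  "m \<in> configs N \<Longrightarrow> weight b (add_occ j k m) = exp (- b) ^ (j * k) * weight b m"
proof -
  assume "m \<in> configs N"
  then have "weight b (add_occ j k m) = exp (- b * real (j * k) + - b * real (energy m))"
    by (simp add: weight_def add_occ_configs(2) distrib_left)
  then show ?thesis
    by (simp only: exp_add exp_minus_mult_of_nat weight_def)
qed

lemma weight_shift_up:
  "m \<in> configs N \<Longrightarrow> weight b (shift_up m) = exp (- b) ^ N * weight b m"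
proof -
  assume "m \<in> configs N"
  then have "weight b (shift_up m) = exp (- b * real N + - b * real (energy m))"
    by (simp add: weight_def shift_up_configs(2) distrib_left)
  then show ?thesis
    by (simp only: exp_add exp_minus_mult_of_nat weight_def)
qed

section \<open>The partition function\<close>

lemma weight_pos: "weight b n > 0"
  by (simp add: weight_def)

lemma sum_weight_image_add_occ:
  "G \<subseteq> configs N \<Longrightarrow> sum (weight b) (add_occ j k ` G) = exp (- b) ^ (j * k) * sum (weight b) G"
  unfolding sum.reindex[OF inj_on_subset[OF inj_add_occ subset_UNIV]] sum_distrib_left
  by (rule sum.cong) (auto intro: weight_add_occ)

lemma sum_weight_image_shift_up:
  "H \<subseteq> configs N \<Longrightarrow> sum (weight b) (shift_up ` H) = exp (- b) ^ N * sum (weight b) H"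
  unfolding sum.reindex[OF inj_on_subset[OF inj_shift_up subset_UNIV]] sum_distrib_left
  by (rule sum.cong) (auto intro: weight_shift_up)

lemma sum_weight_split_ground_level:
  assumes "finite F" "F \<subseteq> configs (Suc N)"
  obtains G H where "G \<subseteq> configs N" "finite G" "H \<subseteq> configs (Suc N)" "finite H" "shift_up ` H \<subseteq> F"
    "sum (weight b) F = sum (weight b) G + exp (- b) ^ Suc N * sum (weight b) H"
proof -
  have finite_parts: "finite {n \<in> F. 1 \<le> n 0}" "finite {n \<in> F. n 0 = 0}"
    using assms(1) by simp_all
  have "{n \<in> F. 1 \<le> n 0} \<subseteq> add_occ 0 1 ` configs N"
    using assms configs_occ_ge_eq_image[of 1 "Suc N" 0] by auto
  then obtain G where G: "G \<subseteq> configs N" "finite G" "{n \<in> F. 1 \<le> n 0} = add_occ 0 1 ` G"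
    by (rule finite_subset_image_inj[OF inj_add_occ finite_parts(1)])
  have "{n \<in> F. n 0 = 0} \<subseteq> shift_up ` configs (Suc N)"
    using assms configs_occ0_eq_image[of "Suc N"] by auto
  then obtain H where H: "H \<subseteq> configs (Suc N)" "finite H" "{n \<in> F. n 0 = 0} = shift_up ` H"
    by (rule finite_subset_image_inj[OF inj_shift_up finite_parts(2)])
  have "sum (weight b) F = sum (weight b) {n \<in> F. 1 \<le> n 0} + sum (weight b) {n \<in> F. n 0 = 0}"
    using assms(1) by (subst sum.union_disjoint[symmetric]) (auto intro: sum.cong)
  also have "\<dots> = sum (weight b) G + exp (- b) ^ Suc N * sum (weight b) H"
    unfolding G(3) H(3) sum_weight_image_add_occ[OF G(1)] sum_weight_image_shift_up[OF H(1)]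
    by simp
  finally have "sum (weight b) F = sum (weight b) G + exp (- b) ^ Suc N * sum (weight b) H" .
  moreover have "shift_up ` H \<subseteq> F"
    using H(3) by blast
  ultimately show ?thesis
    by (intro that[OF G(1,2) H(1,2)])
qed

lemma sum_weight_le_step:
  assumes "b > 0"
    and bound: "\<And>G. finite G \<Longrightarrow> G \<subseteq> configs N \<Longrightarrow> sum (weight b) G \<le> C"
    and "finite F" "F \<subseteq> configs (Suc N)" "\<forall>n\<in>F. \<forall>j\<ge>M. n j = 0"
  shows "sum (weight b) F \<le> C / (1 - exp (- b) ^ Suc N)"
  using assms(3-)
proof (induction M arbitrary: F)
  case 0
  have "n \<notin> configs (Suc N)" if "\<forall>j\<ge>0. n j = 0" for n
    using mem_configs_iff[OF that] by simp
  then have "F = {}"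
    using "0.prems" by blast
  then show ?case
    using bound[of "{}"] power_Suc_less_one[of "exp (- b)" N] \<open>b > 0\<close> by simp
next
  case (Suc M)
  define e where "e = exp (- b) ^ Suc N"
  have e: "0 < e" "e < 1"
    using \<open>b > 0\<close> unfolding e_def by (simp, intro power_Suc_less_one) auto
  obtain G H where G: "G \<subseteq> configs N" "finite G" and H: "H \<subseteq> configs (Suc N)" "finite H"
    "shift_up ` H \<subseteq> F" and split: "sum (weight b) F = sum (weight b) G + e * sum (weight b) H"
    using sum_weight_split_ground_level[OF Suc.prems(1,2)] unfolding e_def .
  \<comment> \<open>The configurations with an empty ground level come from \<open>H\<close> by shifting up, so \<open>H\<close>
    has a smaller support bound and the induction hypothesis applies to it.\<close>
  have "\<forall>m\<in>H. \<forall>j\<ge>M. m j = 0"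
  proof (intro ballI allI impI)
    fix m j assume "m \<in> H" "M \<le> j"
    then have "shift_up m (Suc j) = 0"
      using H(3) Suc.prems(3) by blast
    then show "m j = 0" by simp
  qed
  then have "sum (weight b) H \<le> C / (1 - e)"
    using Suc.IH H(1,2) unfolding e_def by blast
  then have "sum (weight b) F \<le> C + e * (C / (1 - e))"
    unfolding split using bound G e by (intro add_mono mult_left_mono) auto
  also have "\<dots> = C / (1 - e)"
    using e by (simp add: field_simps)
  finally show ?case
    unfolding e_def .
qed

lemma sum_weight_configs_le:
  assumes "b > 0" "finite F" "F \<subseteq> configs N"
  shows "sum (weight b) F \<le> (\<Prod>k=1..N. 1 / (1 - exp (- b) ^ k))"
  using assms(2,3)
proof (induction N arbitrary: F)
  case 0
  then have "sum (weight b) F \<le> sum (weight b) {\<lambda>_. 0}"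
    using configs_0 less_imp_le[OF weight_pos] by (intro sum_mono2) auto
  also have "\<dots> = 1"
    by (simp add: weight_def energy_def)
  finally show ?case by simp
next
  case (Suc N)
  obtain M where "\<forall>n\<in>F. \<forall>j\<ge>M. n j = 0"
    using configs_finite_support Suc.prems by blast
  then have "sum (weight b) F \<le> (\<Prod>k=1..N. 1 / (1 - exp (- b) ^ k)) / (1 - exp (- b) ^ Suc N)"
    using Suc assms(1) by (intro sum_weight_le_step) auto
  then show ?case
    by (simp add: prod.nat_ivl_Suc')
qed

lemma weight_summable_on_configs: "b > 0 \<Longrightarrow> weight b summable_on configs N"
  using sum_weight_configs_le less_imp_le[OF weight_pos]
  by (intro nonneg_bdd_above_summable_on bdd_aboveI) auto

lemma infsum_weight_occ_ge:
  assumes "b > 0" "k \<le> N"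
  shows "(\<Sum>\<^sub>\<infinity>n\<in>{n \<in> configs N. k \<le> n j}. weight b n) = exp (- b) ^ (j * k) * partition_fn (N - k) b"
proof -
  have "(\<Sum>\<^sub>\<infinity>n\<in>{n \<in> configs N. k \<le> n j}. weight b n)
      = (\<Sum>\<^sub>\<infinity>m\<in>configs (N - k). weight b (add_occ j k m))"
    unfolding configs_occ_ge_eq_image[OF assms(2)]
    by (simp add: infsum_reindex[OF inj_on_subset[OF inj_add_occ subset_UNIV]] comp_def)
  also have "\<dots> = (\<Sum>\<^sub>\<infinity>m\<in>configs (N - k). exp (- b) ^ (j * k) * weight b m)"
    by (rule infsum_cong) (rule weight_add_occ)
  also have "\<dots> = exp (- b) ^ (j * k) * partition_fn (N - k) b"
    unfolding partition_fn_def by (rule infsum_cmult_right[OF weight_summable_on_configs[OF assms(1)]])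
  finally show ?thesis .
qed

lemma partition_fn_Suc:
  assumes "b > 0"
  shows "partition_fn (Suc N) b = partition_fn N b + exp (- b) ^ Suc N * partition_fn (Suc N) b"
proof -
  let ?occupied = "{n \<in> configs (Suc N). 1 \<le> n 0}" and ?empty = "{n \<in> configs (Suc N). n 0 = 0}"
  have "partition_fn (Suc N) b = (\<Sum>\<^sub>\<infinity>n\<in>?occupied. weight b n) + (\<Sum>\<^sub>\<infinity>n\<in>?empty. weight b n)"
    unfolding partition_fn_def
    using weight_summable_on_configs[OF assms]
    by (subst infsum_Un_disjoint[symmetric]) (auto intro: summable_on_subset arg_cong2[where f = infsum])
  also have "(\<Sum>\<^sub>\<infinity>n\<in>?occupied. weight b n) = partition_fn N b"
    using infsum_weight_occ_ge[OF assms, of 1 "Suc N" 0] by simp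
  also have "(\<Sum>\<^sub>\<infinity>n\<in>?empty. weight b n) = (\<Sum>\<^sub>\<infinity>m\<in>configs (Suc N). weight b (shift_up m))"
    unfolding configs_occ0_eq_image
    by (simp add: infsum_reindex[OF inj_on_subset[OF inj_shift_up subset_UNIV]] comp_def)
  also have "\<dots> = (\<Sum>\<^sub>\<infinity>m\<in>configs (Suc N). exp (- b) ^ Suc N * weight b m)"
    by (rule infsum_cong) (rule weight_shift_up)
  also have "\<dots> = exp (- b) ^ Suc N * partition_fn (Suc N) b"
    unfolding partition_fn_def by (rule infsum_cmult_right[OF weight_summable_on_configs[OF assms]])
  finally show ?thesis .
qed

lemma partition_fn_ge_1:
  assumes "b > 0"
  shows "1 \<le> partition_fn N b"
proof -
  have "weight b (\<lambda>j. if j = 0 then N else 0) \<le> partition_fn N b"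
    unfolding partition_fn_def
    using finite_sum_le_infsum[OF weight_summable_on_configs[OF assms], of "{\<lambda>j. if j = 0 then N else 0}"]
      ground_state_configs(1) less_imp_le[OF weight_pos]
    by auto
  then show ?thesis
    by (simp add: weight_def ground_state_configs(2))
qed

lemma infsum_occ_weight:
  assumes "b > 0"
  shows "(\<Sum>\<^sub>\<infinity>n\<in>configs N. real (n j) * weight b n)
      = (\<Sum>k<N. exp (- b) ^ (j * Suc k) * partition_fn (N - Suc k) b)"
proof -
  \<comment> \<open>\<open>n j\<close> is the number of \<open>k < N\<close> with \<open>k < n j\<close>.\<close>
  define S where "S k = {n \<in> configs N. Suc k \<le> n j}" for k
  have "((\<lambda>n. if n \<in> S k then weight b n else 0) has_sum (\<Sum>\<^sub>\<infinity>n\<in>S k. weight b n)) (configs N)" for k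
    using weight_summable_on_configs[OF assms]
    by (subst has_sum_cong_neutral[where T = "S k" and g = "weight b"])
       (auto simp: S_def intro: has_sum_infsum summable_on_subset)
  moreover have occupation_eq: "(\<Sum>k<N. if n \<in> S k then weight b n else 0) = real (n j) * weight b n"
    if "n \<in> configs N" for n
  proof -
    have "{..<N} \<inter> {k. Suc k \<le> n j} = {..<n j}"
      using configs_le[OF that, of j] by auto
    then show ?thesis
      using that by (simp add: S_def sum.If_cases)
  qed
  ultimately have "((\<lambda>n. real (n j) * weight b n) has_sum
      (\<Sum>k<N. \<Sum>\<^sub>\<infinity>n\<in>S k. weight b n)) (configs N)"
    by (subst has_sum_cong[OF occupation_eq, symmetric]) (auto intro: has_sum_sum)
  then show ?thesis
    unfolding S_def by (simp add: infsumI infsum_weight_occ_ge[OF assms])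
qed

section \<open>Closed form of the mean occupation numbers\<close>

definition partition_ratio :: "real \<Rightarrow> nat \<Rightarrow> nat \<Rightarrow> real" where
  "partition_ratio q N k = (\<Prod>i<k. 1 - q ^ (N - i))"

lemma partition_fn_diff_eq:
  assumes "b > 0"
  shows "k \<le> N \<Longrightarrow> partition_fn (N - k) b = partition_ratio (exp (- b)) N k * partition_fn N b"
proof (induction k)
  case 0
  then show ?case by (simp add: partition_ratio_def)
next
  case (Suc k)
  then have "Suc (N - Suc k) = N - k" by simp
  then have "partition_fn (N - Suc k) b = (1 - exp (- b) ^ (N - k)) * partition_fn (N - k) b"
    using partition_fn_Suc[OF assms, of "N - Suc k"] by (simp add: algebra_simps)
  then show ?case
    using Suc by (simp add: partition_ratio_def)
qed

lemma mean_occ_eq: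
  assumes "b > 0"
  shows "mean_occ N b j = (\<Sum>k<N. exp (- b) ^ (j * Suc k) * partition_ratio (exp (- b)) N (Suc k))"
proof -
  have "partition_fn N b \<noteq> 0"
    using partition_fn_ge_1[OF assms, of N] by simp
  then show ?thesis
    unfolding mean_occ_def infsum_occ_weight[OF assms] sum_divide_distrib
    by (intro sum.cong) (simp_all add: partition_fn_diff_eq[OF assms])
qed

lemma partition_ratio_nonneg: "0 \<le> q \<Longrightarrow> q \<le> 1 \<Longrightarrow> 0 \<le> partition_ratio q N k"
  unfolding partition_ratio_def by (intro prod_nonneg) (simp add: power_le_one)

lemma partition_ratio_le_1: "0 \<le> q \<Longrightarrow> q \<le> 1 \<Longrightarrow> partition_ratio q N k \<le> 1"
  unfolding partition_ratio_def by (intro prod_le_1) (auto simp: power_le_one)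

lemma partition_ratio_le_power:
  assumes "0 \<le> q" "q \<le> 1"
  shows "partition_ratio q N k \<le> (1 - q ^ N) ^ k"
proof -
  have "partition_ratio q N k \<le> (\<Prod>i<k. 1 - q ^ N)"
    unfolding partition_ratio_def
    using assms by (intro prod_mono) (auto simp: power_le_one power_decreasing)
  then show ?thesis by simp
qed

lemma power_le_partition_ratio:
  assumes "0 \<le> q" "q \<le> 1" "k \<le> K" "K \<le> N"
  shows "(1 - q ^ (N + 1 - K)) ^ k \<le> partition_ratio q N k"
proof -
  have "(\<Prod>i<k. 1 - q ^ (N + 1 - K)) \<le> partition_ratio q N k"
    unfolding partition_ratio_def
    using assms by (intro prod_mono) (auto simp: power_le_one intro!: power_decreasing)
  then show ?thesis by simp
qed

text \<open>The closed form of \<open>\<Sum>\<^sub>j \<langle>n\<^sub>j\<rangle> = N\<close>, obtained by summing the geometric series over \<open>j\<close>.\<close>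

lemma sum_partition_ratio:
  assumes "0 < q" "q < 1"
  shows "(\<Sum>k<N. partition_ratio q N (Suc k) / (1 - q ^ Suc k)) = real N"
proof (induction N)
  case 0
  then show ?case by simp
next
  case (Suc N)
  have den: "1 - q ^ Suc m \<noteq> 0" for m
    using power_Suc_less_one[OF assms, of m] by simp
  have ratio_Suc_Suc: "partition_ratio q (Suc N) (Suc k) = (1 - q ^ Suc N) * partition_ratio q N k" for k
    unfolding partition_ratio_def by (subst prod.lessThan_Suc_shift) simp
  have step: "(1 - q ^ Suc N) * partition_ratio q N k / (1 - q ^ Suc k)
      = partition_ratio q N (Suc k) / (1 - q ^ Suc k) + (partition_ratio q N k - partition_ratio q N (Suc k))"
    if "k < N" for k
  proof -
    have split_power: "q ^ Suc N = q ^ (N - k) * q ^ Suc k"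
      using that by (simp add: power_add[symmetric])
    have ratio_Suc: "partition_ratio q N (Suc k) = partition_ratio q N k * (1 - q ^ (N - k))"
      by (simp add: partition_ratio_def)
    show ?thesis
      unfolding ratio_Suc split_power using den[of k] by (simp add: field_simps)
  qed
  have "(\<Sum>k<Suc N. partition_ratio q (Suc N) (Suc k) / (1 - q ^ Suc k))
      = (\<Sum>k<N. (1 - q ^ Suc N) * partition_ratio q N k / (1 - q ^ Suc k)) + partition_ratio q N N"
    using den[of N] by (simp add: ratio_Suc_Suc)
  also have "(\<Sum>k<N. (1 - q ^ Suc N) * partition_ratio q N k / (1 - q ^ Suc k))
      = (\<Sum>k<N. partition_ratio q N (Suc k) / (1 - q ^ Suc k))
        + (\<Sum>k<N. partition_ratio q N k - partition_ratio q N (Suc k))"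
    by (subst sum.distrib[symmetric], rule sum.cong[OF refl], rule step) simp
  also have "(\<Sum>k<N. partition_ratio q N k - partition_ratio q N (Suc k))
      = partition_ratio q N 0 - partition_ratio q N N"
    by (rule sum_lessThan_telescope')
  finally show ?case
    using Suc.IH by (simp add: partition_ratio_def)
qed

lemma mean_occ_nonneg: "b > 0 \<Longrightarrow> 0 \<le> mean_occ N b j"
  unfolding mean_occ_eq by (intro sum_nonneg mult_nonneg_nonneg partition_ratio_nonneg) auto

lemma mean_occ_le_excited:
  assumes "b > 0" "1 \<le> j"
  shows "mean_occ N b j \<le> 1 / (1 - exp (- b))"
proof -
  define q where "q = exp (- b)"
  have q: "0 < q" "q < 1"
    using assms(1) by (simp_all add: q_def)
  have "mean_occ N b j \<le> (\<Sum>k<N. q ^ Suc k)"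
    unfolding mean_occ_eq[OF assms(1)] q_def[symmetric]
  proof (rule sum_mono)
    fix k
    have "q ^ (j * Suc k) \<le> q ^ Suc k"
      using q mult_le_mono1[OF assms(2), of "Suc k"] by (intro power_decreasing) auto
    then show "q ^ (j * Suc k) * partition_ratio q N (Suc k) \<le> q ^ Suc k"
      using q partition_ratio_le_1[of q N "Suc k"] partition_ratio_nonneg[of q N "Suc k"]
      by (smt (verit) mult_left_le zero_le_power)
  qed
  also have "\<dots> \<le> q / (1 - q)"
    using q by (intro sum_power_Suc_lessThan_le) auto
  also have "\<dots> \<le> 1 / (1 - q)"
    using q by (intro divide_right_mono) auto
  finally show ?thesis
    unfolding q_def .
qed

lemma mean_occ_le:
  assumes "b > 0"
  shows "mean_occ N b j \<le> 1 / exp (- b) ^ N"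
proof -
  define q where "q = exp (- b)"
  have q: "0 < q" "q < 1"
    using assms by (simp_all add: q_def)
  define x where "x = 1 - q ^ N"
  have x: "0 \<le> x" "x < 1"
    using q by (simp_all add: x_def power_le_one)
  have "mean_occ N b j \<le> (\<Sum>k<N. x ^ Suc k)"
    unfolding mean_occ_eq[OF assms] q_def[symmetric]
  proof (rule sum_mono)
    fix k
    have "q ^ (j * Suc k) * partition_ratio q N (Suc k) \<le> partition_ratio q N (Suc k)"
      using q partition_ratio_nonneg[of q N "Suc k"]
      by (intro mult_left_le_one_le) (auto simp: power_le_one)
    also have "\<dots> \<le> x ^ Suc k"
      unfolding x_def using q by (intro partition_ratio_le_power) auto
    finally show "q ^ (j * Suc k) * partition_ratio q N (Suc k) \<le> x ^ Suc k" .
  qed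
  also have "\<dots> \<le> x / (1 - x)"
    using x by (intro sum_power_Suc_lessThan_le)
  also have "\<dots> \<le> 1 / (1 - x)"
    using x by (intro divide_right_mono) auto
  finally show ?thesis
    unfolding q_def x_def by simp
qed

lemma sum_mean_occ_eq:
  assumes "b > 0"
  shows "(\<Sum>j<J. mean_occ N b j) = real N
    - (\<Sum>k<N. partition_ratio (exp (- b)) N (Suc k) * exp (- b) ^ (J * Suc k) / (1 - exp (- b) ^ Suc k))"
proof -
  define q where "q = exp (- b)"
  have q: "0 < q" "q < 1"
    using assms by (simp_all add: q_def)
  have geometric: "(\<Sum>j<J. q ^ (j * Suc k) * partition_ratio q N (Suc k))
      = partition_ratio q N (Suc k) / (1 - q ^ Suc k)
        - partition_ratio q N (Suc k) * q ^ (J * Suc k) / (1 - q ^ Suc k)" for k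
  proof -
    have "q ^ Suc k \<noteq> 1"
      using power_Suc_less_one[OF q, of k] by simp
    have power_Suc_power: "(q ^ Suc k) ^ j = q ^ (j * Suc k)" for j
      by (metis power_mult mult.commute)
    have "(\<Sum>j<J. q ^ (j * Suc k) * partition_ratio q N (Suc k))
        = (\<Sum>j<J. (q ^ Suc k) ^ j) * partition_ratio q N (Suc k)"
      by (simp only: power_Suc_power sum_distrib_right)
    also have "\<dots> = (1 - (q ^ Suc k) ^ J) / (1 - q ^ Suc k) * partition_ratio q N (Suc k)"
      using \<open>q ^ Suc k \<noteq> 1\<close> by (simp only: sum_gp_strict if_False)
    also have "\<dots> = partition_ratio q N (Suc k) / (1 - q ^ Suc k)
        - partition_ratio q N (Suc k) * q ^ (J * Suc k) / (1 - q ^ Suc k)"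
      unfolding power_Suc_power by (simp add: diff_divide_distrib algebra_simps)
    finally show ?thesis .
  qed
  have "(\<Sum>j<J. mean_occ N b j) = (\<Sum>k<N. \<Sum>j<J. q ^ (j * Suc k) * partition_ratio q N (Suc k))"
    unfolding mean_occ_eq[OF assms] q_def[symmetric] by (rule sum.swap)
  also have "\<dots> = real N - (\<Sum>k<N. partition_ratio q N (Suc k) * q ^ (J * Suc k) / (1 - q ^ Suc k))"
    by (simp only: geometric sum_subtractf sum_partition_ratio[OF q])
  finally show ?thesis
    unfolding q_def .
qed

lemma sum_mean_occ_le:
  assumes "b > 0"
  shows "(\<Sum>j<J. mean_occ N b j) \<le> real N"
proof -
  have "0 < 1 - exp (- b) ^ Suc k" for k
    using power_Suc_less_one[of "exp (- b)" k] assms by simp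
  then have "0 \<le> (\<Sum>k<N. partition_ratio (exp (- b)) N (Suc k) * exp (- b) ^ (J * Suc k)
      / (1 - exp (- b) ^ Suc k))"
    using assms by (intro sum_nonneg divide_nonneg_pos mult_nonneg_nonneg partition_ratio_nonneg) auto
  then show ?thesis
    unfolding sum_mean_occ_eq[OF assms] by simp
qed

lemma sum_mean_occ_ge:
  assumes "b > 0" "exp (- b) ^ J \<le> 1 / 2"
  shows "real N - 1 / (1 - exp (- b)) \<le> (\<Sum>j<J. mean_occ N b j)"
proof -
  define q where "q = exp (- b)"
  have q: "0 < q" "q < 1"
    using assms by (simp_all add: q_def)
  define x where "x = q ^ J"
  have x: "0 \<le> x" "x \<le> 1 / 2"
    using assms q by (simp_all add: x_def q_def)
  have "(\<Sum>k<N. partition_ratio q N (Suc k) * q ^ (J * Suc k) / (1 - q ^ Suc k))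
      \<le> (\<Sum>k<N. x ^ Suc k / (1 - q))"
  proof (rule sum_mono)
    fix k
    have "q ^ Suc k \<le> q"
      using q by (intro power_decreasing[of 1, simplified]) auto
    moreover have "q ^ Suc k < 1"
      using q by (intro power_Suc_less_one)
    moreover have "partition_ratio q N (Suc k) * q ^ (J * Suc k) \<le> x ^ Suc k"
      using q partition_ratio_le_1[of q N "Suc k"] unfolding x_def power_mult
      by (simp add: mult_left_le_one_le)
    moreover have "0 \<le> partition_ratio q N (Suc k) * q ^ (J * Suc k)"
      using q by (simp add: partition_ratio_nonneg)
    ultimately show "partition_ratio q N (Suc k) * q ^ (J * Suc k) / (1 - q ^ Suc k) \<le> x ^ Suc k / (1 - q)"
      using q by (intro frac_le) auto
  qed
  also have "\<dots> = (\<Sum>k<N. x ^ Suc k) / (1 - q)"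
    by (simp add: sum_divide_distrib)
  also have "\<dots> \<le> (x / (1 - x)) / (1 - q)"
    using x q by (intro divide_right_mono sum_power_Suc_lessThan_le) auto
  also have "\<dots> \<le> 1 / (1 - q)"
    using x q by (intro divide_right_mono) (auto simp: field_simps)
  finally show ?thesis
    unfolding sum_mean_occ_eq[OF assms(1)] q_def by simp
qed

lemma mean_occ_1_ge:
  assumes "b > 0"
  shows "(\<Sum>k<N. exp (- b) ^ Suc k) - (real N)\<^sup>2 * exp (- b) ^ N \<le> mean_occ N b 1"
proof -
  define q where "q = exp (- b)"
  have q: "0 < q" "q < 1"
    using assms by (simp_all add: q_def)
  have "q ^ Suc k - real N * q ^ N \<le> q ^ Suc k * partition_ratio q N (Suc k)" if "k < N" for k
  proof -
    have "1 - real (Suc k) * q ^ (N - k) \<le> (1 - q ^ (N - k)) ^ Suc k"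
      using Bernoulli_inequality[of "- (q ^ (N - k))" "Suc k"] q by (simp add: power_le_one)
    also have "\<dots> \<le> partition_ratio q N (Suc k)"
      using power_le_partition_ratio[of q "Suc k" "Suc k" N] q that by simp
    finally have bernoulli: "1 - real (Suc k) * q ^ (N - k) \<le> partition_ratio q N (Suc k)" .
    have "real (Suc k) * q ^ Suc N \<le> real N * q ^ N"
      using q that by (intro mult_mono power_decreasing) auto
    then have "q ^ Suc k - real N * q ^ N \<le> q ^ Suc k - real (Suc k) * q ^ Suc N"
      by linarith
    also have "\<dots> = q ^ Suc k * (1 - real (Suc k) * q ^ (N - k))"
      using that by (simp add: algebra_simps power_add[symmetric])
    also have "\<dots> \<le> q ^ Suc k * partition_ratio q N (Suc k)"
      using q bernoulli by (intro mult_left_mono) auto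
    finally show ?thesis .
  qed
  then have "(\<Sum>k<N. q ^ Suc k - real N * q ^ N) \<le> (\<Sum>k<N. q ^ Suc k * partition_ratio q N (Suc k))"
    by (intro sum_mono) auto
  moreover have "(\<Sum>k<N. q ^ Suc k - real N * q ^ N) = (\<Sum>k<N. q ^ Suc k) - (real N)\<^sup>2 * q ^ N"
    by (simp add: sum_subtractf power2_eq_square)
  ultimately show ?thesis
    unfolding mean_occ_eq[OF assms] q_def by simp
qed

lemma mean_occ_ge_truncated:
  assumes "b > 0" "K \<le> N"
  shows "exp (- b) ^ (i * K) * (\<Sum>k<K. (1 - exp (- b) ^ (N + 1 - K)) ^ Suc k) \<le> mean_occ N b i"
proof -
  define q where "q = exp (- b)"
  have q: "0 < q" "q < 1"
    using assms by (simp_all add: q_def)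
  have "q ^ (i * K) * (\<Sum>k<K. (1 - q ^ (N + 1 - K)) ^ Suc k)
      = (\<Sum>k<K. q ^ (i * K) * (1 - q ^ (N + 1 - K)) ^ Suc k)"
    by (simp add: sum_distrib_left)
  also have "\<dots> \<le> (\<Sum>k<K. q ^ (i * Suc k) * partition_ratio q N (Suc k))"
  proof (rule sum_mono)
    fix k assume "k \<in> {..<K}"
    then have "q ^ (i * K) \<le> q ^ (i * Suc k)"
      using q by (intro power_decreasing mult_le_mono2) auto
    moreover have "(1 - q ^ (N + 1 - K)) ^ Suc k \<le> partition_ratio q N (Suc k)"
      using q \<open>k \<in> {..<K}\<close> assms(2) by (intro power_le_partition_ratio) auto
    ultimately show "q ^ (i * K) * (1 - q ^ (N + 1 - K)) ^ Suc k \<le> q ^ (i * Suc k) * partition_ratio q N (Suc k)"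
      using q by (intro mult_mono) (auto simp: power_le_one)
  qed
  also have "\<dots> \<le> (\<Sum>k<N. q ^ (i * Suc k) * partition_ratio q N (Suc k))"
    using assms(2) q by (intro sum_mono2) (auto intro!: mult_nonneg_nonneg partition_ratio_nonneg)
  finally show ?thesis
    unfolding mean_occ_eq[OF assms(1)] q_def .
qed

text \<open>A smoothed form of the previous bound, with the cut-off K replaced by any real L such that
  K = floor L, so that its asymptotics can be computed by \<open>real_asymp\<close>.\<close>

lemma mean_occ_ge:
  assumes "b > 0" "1 \<le> L" "L \<le> real N"
  shows "exp (- b * real i * L) * (exp (b * (real N - L)) - 1)
      * (1 - exp (- (L - 1) * exp (- b * (real N + 1)))) \<le> mean_occ N b i"
proof -
  define K where "K = nat \<lfloor>L\<rfloor>"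
  define y where "y = 1 - exp (- b) ^ (N + 1 - K)"
  have K: "real K \<le> L" "L - 1 \<le> real K" "K \<le> N"
    using assms(2,3) unfolding K_def by linarith+
  have one_minus_y: "1 - y = exp (- b * (real N + 1 - real K))"
    using K(3) by (simp add: y_def exp_minus_mult_of_nat[symmetric])
  have y: "0 \<le> y" "y < 1"
    using assms(1) by (simp_all add: y_def power_le_one)
  have truncated: "exp (- b) ^ (i * K) * (y / (1 - y)) * (1 - y ^ K) \<le> mean_occ N b i"
    using mean_occ_ge_truncated[OF assms(1) K(3), of i] sum_power_Suc_lessThan[of y K] y
    unfolding y_def[symmetric] by simp
  have factor1: "exp (- b * real i * L) \<le> exp (- b) ^ (i * K)"
    unfolding exp_minus_mult_of_nat[symmetric] using assms(1) K(1) by (simp add: mult_left_mono)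
  have "1 - y = inverse (exp (b * (real N + 1 - real K)))"
    unfolding one_minus_y by (simp add: exp_minus[symmetric])
  then have "y / (1 - y) = exp (b * (real N + 1 - real K)) - 1"
    using y by (simp add: field_simps)
  then have factor2: "exp (b * (real N - L)) - 1 \<le> y / (1 - y)"
    using assms(1) K(1) by (simp add: mult_left_mono)
  have "exp (- b * (real N + 1)) \<le> 1 - y"
    unfolding one_minus_y using assms(1) by (simp add: mult_left_mono)
  then have "(L - 1) * exp (- b * (real N + 1)) \<le> real K * (1 - y)"
    using K(2) assms(2) y by (intro mult_mono) auto
  then have "exp (- (real K * (1 - y))) \<le> exp (- (L - 1) * exp (- b * (real N + 1)))"
    by (simp add: algebra_simps)
  then have factor3: "1 - exp (- (L - 1) * exp (- b * (real N + 1))) \<le> 1 - y ^ K"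
    using power_le_exp_minus[OF y(1), of K] by linarith
  have "0 \<le> exp (b * (real N - L)) - 1" "0 \<le> 1 - exp (- (L - 1) * exp (- b * (real N + 1)))"
    using assms by (simp_all add: mult_nonpos_nonneg)
  then have "exp (- b * real i * L) * (exp (b * (real N - L)) - 1)
      * (1 - exp (- (L - 1) * exp (- b * (real N + 1)))) \<le> exp (- b) ^ (i * K) * (y / (1 - y)) * (1 - y ^ K)"
    using factor1 factor2 factor3 y by (intro mult_mono) auto
  then show ?thesis
    using truncated by linarith
qed

section \<open>Asymptotics at the scaled inverse temperature\<close>

lemma scaled_a_pos: "a > 0 \<Longrightarrow> 2 \<le> N \<Longrightarrow> scaled_a a N > 0"
  unfolding scaled_a_def by simp

lemma exp_minus_scaled_a_power: "1 \<le> N \<Longrightarrow> exp (- scaled_a a N) ^ N = real N powr (- a)"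
  unfolding exp_minus_mult_of_nat[symmetric] scaled_a_def by (simp add: powr_def)

lemma Collect_less_real_eq_lessThan: "{j::nat. real j < c} = {..<nat \<lceil>c\<rceil>}"
proof (intro set_eqI)
  fix j :: nat
  have "real j < c \<longleftrightarrow> int j < \<lceil>c\<rceil>"
    by (simp add: less_ceiling_iff)
  then show "j \<in> {j. real j < c} \<longleftrightarrow> j \<in> {..<nat \<lceil>c\<rceil>}"
    by auto
qed

lemma exp_minus_power_ceiling_le_half:
  fixes b :: real
  assumes "b > 0"
  shows "exp (- b) ^ nat \<lceil>2 / b\<rceil> \<le> 1 / 2"
proof -
  define J where "J = nat \<lceil>2 / b\<rceil>"
  have "2 / b \<le> real J"
    unfolding J_def by linarith
  then have "exp (- b * real J) \<le> exp (- 2)"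
    using assms by (simp add: field_simps)
  also have "exp (- 2) \<le> (1 / 2 :: real)"
    using exp_ge_add_one_self[of "2::real"] by (simp add: exp_minus field_simps)
  finally show ?thesis
    unfolding exp_minus_mult_of_nat J_def .
qed

lemma tendsto_condensate_fraction:
  assumes "a > 0"
  shows "(\<lambda>N. (1 / real N) * (\<Sum>j\<in>{j::nat. real j < 2 / scaled_a a N}. mean_occ N (scaled_a a N) j))
    \<longlonglongrightarrow> 1"
proof (rule real_tendsto_sandwich)
  have bounds: "1 - 1 / (real N * (1 - exp (- scaled_a a N)))
      \<le> (1 / real N) * (\<Sum>j\<in>{j::nat. real j < 2 / scaled_a a N}. mean_occ N (scaled_a a N) j)
    \<and> (1 / real N) * (\<Sum>j\<in>{j::nat. real j < 2 / scaled_a a N}. mean_occ N (scaled_a a N) j) \<le> 1"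
    if "2 \<le> N" for N
  proof -
    define b where "b = scaled_a a N"
    have b: "b > 0"
      using scaled_a_pos[OF assms that] by (simp add: b_def)
    define S where "S = (\<Sum>j<nat \<lceil>2 / b\<rceil>. mean_occ N b j)"
    have "real N - 1 / (1 - exp (- b)) \<le> S" "S \<le> real N"
      unfolding S_def using b exp_minus_power_ceiling_le_half
      by (auto intro: sum_mean_occ_ge sum_mean_occ_le)
    moreover have "1 - 1 / (real N * (1 - exp (- b))) = (1 / real N) * (real N - 1 / (1 - exp (- b)))"
      using that b by (simp add: field_simps)
    ultimately have "1 - 1 / (real N * (1 - exp (- b))) \<le> (1 / real N) * S \<and> (1 / real N) * S \<le> 1"
      using that by (auto intro: mult_left_mono simp: field_simps)
    then show ?thesis
      unfolding Collect_less_real_eq_lessThan S_def b_def .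
  qed
  then show "eventually (\<lambda>N. 1 - 1 / (real N * (1 - exp (- scaled_a a N)))
      \<le> (1 / real N) * (\<Sum>j\<in>{j::nat. real j < 2 / scaled_a a N}. mean_occ N (scaled_a a N) j)) sequentially"
    and "eventually (\<lambda>N. (1 / real N) * (\<Sum>j\<in>{j::nat. real j < 2 / scaled_a a N}. mean_occ N (scaled_a a N) j)
      \<le> 1) sequentially"
    by (auto intro: eventually_sequentiallyI[of 2])
  show "(\<lambda>N. 1 - 1 / (real N * (1 - exp (- scaled_a a N)))) \<longlonglongrightarrow> 1"
    unfolding scaled_a_def using assms by real_asymp
qed simp

lemma tendsto_mean_occ_excited_fraction:
  assumes "a > 0" "1 \<le> i"
  shows "(\<lambda>N. mean_occ N (scaled_a a N) i / real N) \<longlonglongrightarrow> 0"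
proof (rule real_tendsto_sandwich)
  show "eventually (\<lambda>N. 0 \<le> mean_occ N (scaled_a a N) i / real N) sequentially"
    using assms scaled_a_pos mean_occ_nonneg by (intro eventually_sequentiallyI[of 2]) auto
  have "mean_occ N (scaled_a a N) i / real N \<le> 1 / (real N * (1 - exp (- scaled_a a N)))"
    if "2 \<le> N" for N
    using divide_right_mono[OF mean_occ_le_excited[OF scaled_a_pos[OF assms(1) that] assms(2), of N],
        of "real N"]
    by (simp add: mult.commute)
  then show "eventually (\<lambda>N. mean_occ N (scaled_a a N) i / real N
      \<le> 1 / (real N * (1 - exp (- scaled_a a N)))) sequentially"
    by (intro eventually_sequentiallyI[of 2])
  show "(\<lambda>N. 1 / (real N * (1 - exp (- scaled_a a N)))) \<longlonglongrightarrow> 0"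
    unfolding scaled_a_def using assms by real_asymp
qed simp

lemma filterlim_mean_occ_1_at_top:
  assumes "a > 1" "\<eta> < 1"
  shows "filterlim (\<lambda>N. real N powr (- \<eta>) * mean_occ N (scaled_a a N) 1) at_top sequentially"
proof (rule filterlim_at_top_mono)
  show "filterlim (\<lambda>N. real N powr (- \<eta>) * (exp (- scaled_a a N) * (1 - real N powr (- a)) / scaled_a a N
      - (real N)\<^sup>2 * real N powr (- a))) at_top sequentially"
    unfolding scaled_a_def using assms by real_asymp
  have "exp (- scaled_a a N) * (1 - real N powr (- a)) / scaled_a a N - (real N)\<^sup>2 * real N powr (- a)
      \<le> mean_occ N (scaled_a a N) 1" if "2 \<le> N" for N
  proof -
    define b where "b = scaled_a a N"
    define q where "q = exp (- b)"
    have b: "b > 0"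
      using scaled_a_pos[OF _ that] assms(1) by (simp add: b_def)
    have q: "0 < q" "q < 1"
      using b by (simp_all add: q_def)
    have q_power_N: "q ^ N = real N powr (- a)"
      using exp_minus_scaled_a_power[of N a] that by (simp add: q_def b_def)
    have "1 - q \<le> b"
      using exp_ge_add_one_self[of "- b"] by (simp add: q_def)
    then have "q * (1 - q ^ N) / b \<le> q * (1 - q ^ N) / (1 - q)"
      using q by (intro divide_left_mono mult_nonneg_nonneg) (auto simp: power_le_one)
    also have "\<dots> = (\<Sum>k<N. q ^ Suc k)"
      using sum_power_Suc_lessThan[of q N] q by simp
    finally show ?thesis
      using mean_occ_1_ge[OF b, of N] unfolding q_power_N[symmetric] q_def b_def by linarith
  qed
  then show "eventually (\<lambda>N. real N powr (- \<eta>) * (exp (- scaled_a a N) * (1 - real N powr (- a))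
      / scaled_a a N - (real N)\<^sup>2 * real N powr (- a))
      \<le> real N powr (- \<eta>) * mean_occ N (scaled_a a N) 1) sequentially"
    by (intro eventually_sequentiallyI[of 2] mult_left_mono) auto
qed

lemma tendsto_exp_scaled_a_level_cutoff:
  assumes i: "(\<lambda>N. real (i N)) \<in> o(\<lambda>N. real N powr (1 - a) / (ln (real N))\<^sup>2)"
  shows "(\<lambda>N. exp (- scaled_a a N * real (i N) * (real N powr a * ln (real N)))) \<longlonglongrightarrow> 1"
proof -
  define L where "L N = real N powr a * ln (real N)" for N :: nat
  define h where "h N = real N powr (1 - a) / (ln (real N))\<^sup>2" for N :: nat
  have "(\<lambda>N. (scaled_a a N * L N * h N) * (real (i N) / h N)) \<longlonglongrightarrow> a * 0"
  proof (rule tendsto_mult)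
    show "(\<lambda>N. scaled_a a N * L N * h N) \<longlonglongrightarrow> a"
      unfolding scaled_a_def L_def h_def by real_asymp
    show "(\<lambda>N. real (i N) / h N) \<longlonglongrightarrow> 0"
      unfolding h_def by (rule smalloD_tendsto[OF i])
  qed
  moreover have "eventually (\<lambda>N. (scaled_a a N * L N * h N) * (real (i N) / h N)
      = scaled_a a N * real (i N) * L N) sequentially"
    by (intro eventually_sequentiallyI[of 2]) (simp add: h_def)
  ultimately have "(\<lambda>N. scaled_a a N * real (i N) * L N) \<longlonglongrightarrow> 0"
    by (simp add: tendsto_cong)
  from tendsto_exp[OF tendsto_minus[OF this]] show ?thesis
    unfolding L_def by simp
qed

lemma tendsto_mean_occ_low_levels:
  assumes "0 < a" "a < 1"
    and i: "(\<lambda>N. real (i N)) \<in> o(\<lambda>N. real N powr (1 - a) / (ln (real N))\<^sup>2)"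
  shows "(\<lambda>N. real N powr (- a) * mean_occ N (scaled_a a N) (i N)) \<longlonglongrightarrow> 1"
proof (rule real_tendsto_sandwich)
  define L where "L N = real N powr a * ln (real N)" for N :: nat
  define g where "g N = real N powr (- a) * (exp (scaled_a a N * (real N - L N)) - 1)
    * (1 - exp (- (L N - 1) * exp (- scaled_a a N * (real N + 1))))" for N
  have "eventually (\<lambda>N. 1 \<le> L N) sequentially" "eventually (\<lambda>N. L N \<le> real N) sequentially"
    unfolding L_def using assms(1,2) by real_asymp+
  moreover have "eventually (\<lambda>N. 2 \<le> N) sequentially"
    by (rule eventually_ge_at_top)
  ultimately show "eventually (\<lambda>N. exp (- scaled_a a N * real (i N) * L N) * g N
      \<le> real N powr (- a) * mean_occ N (scaled_a a N) (i N)) sequentially"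
  proof eventually_elim
    case (elim N)
    then have "exp (- scaled_a a N * real (i N) * L N) * g N
        = real N powr (- a) * (exp (- scaled_a a N * real (i N) * L N)
          * (exp (scaled_a a N * (real N - L N)) - 1)
          * (1 - exp (- (L N - 1) * exp (- scaled_a a N * (real N + 1)))))"
      by (simp add: g_def)
    also have "\<dots> \<le> real N powr (- a) * mean_occ N (scaled_a a N) (i N)"
      using elim scaled_a_pos[OF assms(1)] by (intro mult_left_mono mean_occ_ge) auto
    finally show ?case .
  qed
  have "real N powr (- a) * mean_occ N (scaled_a a N) (i N) \<le> 1" if "2 \<le> N" for N
    using mult_left_mono[OF mean_occ_le[OF scaled_a_pos[OF assms(1) that]], of "real N powr (- a)" N "i N"]
      exp_minus_scaled_a_power[of N a] that
    by simp
  then show "eventually (\<lambda>N. real N powr (- a) * mean_occ N (scaled_a a N) (i N) \<le> 1) sequentially"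
    by (intro eventually_sequentiallyI[of 2])
  have "(\<lambda>N. exp (- scaled_a a N * real (i N) * L N)) \<longlonglongrightarrow> 1"
    unfolding L_def by (rule tendsto_exp_scaled_a_level_cutoff[OF i])
  moreover have "g \<longlonglongrightarrow> 1"
    unfolding g_def scaled_a_def L_def using assms(1,2) by real_asymp
  ultimately show "(\<lambda>N. exp (- scaled_a a N * real (i N) * L N) * g N) \<longlonglongrightarrow> 1"
    using tendsto_mult by fastforce
qed simp

theorem theorem4:
  shows
   "(\<forall>a::real. a > 0 \<longrightarrow>
       (\<lambda>N. (1 / real N) * (\<Sum>j\<in>{j::nat. real j < 2 / scaled_a a N}. mean_occ N (scaled_a a N) j))
         \<longlonglongrightarrow> 1)
    \<and> (\<forall>a::real. 0 < a \<and> a < 1 \<longrightarrow>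
       (\<forall>i :: nat \<Rightarrow> nat.
          (\<lambda>N. real (i N)) \<in> o(\<lambda>N. real N powr (1 - a) / (ln (real N))^2) \<longrightarrow>
          (\<lambda>N. real N powr (- a) * mean_occ N (scaled_a a N) (i N)) \<longlonglongrightarrow> 1))
    \<and> (\<forall>a::real. a > 1 \<longrightarrow>
       (\<forall>i::nat. i \<ge> 1 \<longrightarrow>
          (\<lambda>N. mean_occ N (scaled_a a N) i / real N) \<longlonglongrightarrow> 0)
       \<and> (\<forall>\<eta>::real. \<eta> < 1 \<longrightarrow>
          filterlim (\<lambda>N. real N powr (- \<eta>) * mean_occ N (scaled_a a N) 1) at_top sequentially))"
  using tendsto_condensate_fraction tendsto_mean_occ_low_levels
    tendsto_mean_occ_excited_fraction filterlim_mean_occ_1_at_top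
  by (intro conjI allI impI; fastforce)

end
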